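(* Let $k\ge2$, $n\ge1$, $m=kn-1$, and let $\varphi\in C^\infty(\mathbb P_m\mathbb C)$ be $g$-admissible and $G_{n,k}$-invariant. Then for all real $0<\zeta,\gamma\le1$, $$(\varphi-\psi)([1,\zeta^{[n-1]},\gamma^{[(k-1)n]}])\ge(\varphi-\psi)([1,\dots,1]),$$ where $\zeta^{[d]}=(\zeta,\dots,\zeta)\in\mathbb C^d$.
   Context: Homogeneous coordinates on $\mathbb P_m\mathbb C$, $m=kn-1$, are written $[z_0,\dots,z_m]=[Z_0,\dots,Z_{k-1}]$ with blocks $Z_h=(z_{hn},\dots,z_{(h+1)n-1})$. The metric $g$ has components $g_{\lambda\bar\mu}=a_m\,\partial^2\ln(1+|z_1|^2+\cdots+|z_m|^2)/\partial z_\lambda\partial\bar z_\mu$ in the chart $\{z_0=1\}$, for a fixed $a_m>0$. $\varphi$ is $g$-admissible if $g_{\lambda\bar\mu}+\partial^2\varphi/\partial z_\lambda\partial\bar z_\mu$ is positive definite everywhere. $G_{n,k}$ is the automorphism group generated by swaps of two blocks $Z_i,Z_j$, multiplication of a single coordinate $z_p$ by $e^{i\theta}$, and transpositions of two coordinates in the same block. $\psi([z_0,\dots,z_m])=\ln\big((|z_0|\cdots|z_m|)^{2a_m/(m+1)}/(|z_0|^2+\cdots+|z_m|^2)^{a_m}\big)$, defined where all $z_p\ne0$. *)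

theory Defs
  imports "HOL-Analysis.Analysis"
begin

fun Ck_on :: "nat \<Rightarrow> 'a::euclidean_space set \<Rightarrow> ('a \<Rightarrow> real) \<Rightarrow> bool" where
  "Ck_on 0 S f = continuous_on S f"
| "Ck_on (Suc k) S f = (f differentiable_on S \<and> continuous_on S f \<and>
      (\<forall>u. Ck_on k S (\<lambda>z. frechet_derivative f (at z) u)))"

definition smooth_on :: "'a::euclidean_space set \<Rightarrow> ('a \<Rightarrow> real) \<Rightarrow> bool" where
  "smooth_on S f = (\<forall>k. Ck_on k S f)"

definition dD :: "('a::real_normed_vector \<Rightarrow> real) \<Rightarrow> 'a \<Rightarrow> 'a \<Rightarrow> real" where
  "dD f z u = frechet_derivative f (at z) u"

definition dD2 :: "('a::real_normed_vector \<Rightarrow> real) \<Rightarrow> 'a \<Rightarrow> 'a \<Rightarrow> 'a \<Rightarrow> real" where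
  "dD2 f z u v = dD (\<lambda>w. dD f w u) z v"

text \<open>Wirtinger second derivative  d^2 f / (dz_l d conj(z_mu))  of a real function on C^I:
  (1/4) (f_{x_l x_mu} + f_{y_l y_mu} + i (f_{x_l y_mu} - f_{y_l x_mu})).\<close>
definition wirt2 :: "(complex^'i \<Rightarrow> real) \<Rightarrow> complex^'i \<Rightarrow> 'i \<Rightarrow> 'i \<Rightarrow> complex" where
  "wirt2 f z l m =
     (complex_of_real (dD2 f z (axis l 1) (axis m 1) + dD2 f z (axis l \<i>) (axis m \<i>))
      + \<i> * complex_of_real (dD2 f z (axis l 1) (axis m \<i>) - dD2 f z (axis l \<i>) (axis m 1))) / 4"

definition posdef_on :: "('i::finite \<Rightarrow> 'i \<Rightarrow> complex) \<Rightarrow> (complex^'i) set \<Rightarrow> bool" where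
  "posdef_on H W = ((\<forall>l m. H l m = cnj (H m l)) \<and>
     (\<forall>v\<in>W. v \<noteq> 0 \<longrightarrow> 0 < Re (\<Sum>l\<in>UNIV. \<Sum>m\<in>UNIV. H l m * v $ l * cnj (v $ m))))"

text \<open>Functions on P_m C are represented as functions on C^(m+1) - {0} invariant under
  nonzero complex scaling.\<close>
definition proj_fun :: "(complex^'i \<Rightarrow> real) \<Rightarrow> bool" where
  "proj_fun f = (\<forall>c z. c \<noteq> 0 \<longrightarrow> z \<noteq> 0 \<longrightarrow> f (c *s z) = f z)"

text \<open>g-admissibility: in every affine chart {z_j = 1} of P_m C, the matrix
  g_{l mu} + d^2 phi/dz_l d conj(z_mu) is positive definite. The metric g is the
  Fubini-Study-type form a_m dd^c ln |Z|^2; in the chart {z_j = 1} (coordinates z_q, q \<noteq> j)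
  its components are a_m d^2 ln(1 + sum_{q\<noteq>j} |z_q|^2)/dz_l d conj(z_mu), which is the
  restriction to the hyperplane {v_j = 0} of the Wirtinger Hessian of a_m ln |Z|^2
  at a point with z_j = 1 (for j = z_0 this is literally the formula of the paper).\<close>
definition admissible :: "real \<Rightarrow> (complex^'i::finite \<Rightarrow> real) \<Rightarrow> bool" where
  "admissible a \<phi> = (\<forall>j z. z $ j = 1 \<longrightarrow>
      posdef_on (wirt2 (\<lambda>w. a * ln (\<Sum>q\<in>UNIV. (cmod (w $ q))\<^sup>2) + \<phi> w) z) {v. v $ j = 0})"

text \<open>Coordinates: z_p = z $ idx p for p < k*n, where idx is a fixed bijection
  {0..<k*n} \<rightarrow> 'i.  Permutation of coordinates by a permutation s of {0..<k*n}.\<close>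
definition perm_coords :: "(nat \<Rightarrow> 'i) \<Rightarrow> nat \<Rightarrow> (nat \<Rightarrow> nat) \<Rightarrow> complex^'i \<Rightarrow> complex^'i" where
  "perm_coords idx N s z = (\<chi> q. z $ idx (s (inv_into {0..<N} idx q)))"

definition block_swap :: "nat \<Rightarrow> nat \<Rightarrow> nat \<Rightarrow> nat \<Rightarrow> nat" where
  "block_swap n i j p =
     (if p div n = i then j * n + p mod n else if p div n = j then i * n + p mod n else p)"

definition phase_coord :: "(nat \<Rightarrow> 'i) \<Rightarrow> nat \<Rightarrow> real \<Rightarrow> complex^'i \<Rightarrow> complex^'i" where
  "phase_coord idx p \<theta> z = (\<chi> q. if q = idx p then cis \<theta> * z $ q else z $ q)"

inductive_set Gnk :: "(nat \<Rightarrow> 'i) \<Rightarrow> nat \<Rightarrow> nat \<Rightarrow> (complex^'i \<Rightarrow> complex^'i) set"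
  for idx :: "nat \<Rightarrow> 'i" and n k :: nat where
  id: "id \<in> Gnk idx n k"
| swap: "g \<in> Gnk idx n k \<Longrightarrow> i < k \<Longrightarrow> j < k \<Longrightarrow>
           perm_coords idx (k*n) (block_swap n i j) \<circ> g \<in> Gnk idx n k"
| phase: "g \<in> Gnk idx n k \<Longrightarrow> p < k*n \<Longrightarrow> phase_coord idx p \<theta> \<circ> g \<in> Gnk idx n k"
| transp: "g \<in> Gnk idx n k \<Longrightarrow> p < k*n \<Longrightarrow> q < k*n \<Longrightarrow> p div n = q div n \<Longrightarrow>
           perm_coords idx (k*n) (Transposition.transpose p q) \<circ> g \<in> Gnk idx n k"

definition G_invariant :: "(nat \<Rightarrow> 'i) \<Rightarrow> nat \<Rightarrow> nat \<Rightarrow> (complex^'i \<Rightarrow> real) \<Rightarrow> bool" where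
  "G_invariant idx n k \<phi> = (\<forall>g\<in>Gnk idx n k. \<forall>z. z \<noteq> 0 \<longrightarrow> \<phi> (g z) = \<phi> z)"

definition psi :: "real \<Rightarrow> complex^'i::finite \<Rightarrow> real" where
  "psi a z = ln ((\<Prod>q\<in>UNIV. cmod (z $ q)) powr (2 * a / real CARD('i))
                 / (\<Sum>q\<in>UNIV. (cmod (z $ q))\<^sup>2) powr a)"

definition pt :: "(nat \<Rightarrow> 'i) \<Rightarrow> nat \<Rightarrow> nat \<Rightarrow> real \<Rightarrow> real \<Rightarrow> complex^'i" where
  "pt idx n N \<zeta> \<gamma> = (\<chi> q. let p = inv_into {0..<N} idx q in
      if p = 0 then 1 else if p < n then complex_of_real \<zeta> else complex_of_real \<gamma>)"

end

theory Submission
  imports Defs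
begin

(*
  In logarithmic coordinates z = e^X (X real), F(X) = (phi - psi)(e^X) equals
  u(e^X) - (2a/(m+1)) sum_q X_q, where u = a ln |z|^2 + phi is a potential of g + dd^c phi.
  Along a line X + s d, with v = d e^X, the second derivative of u(e^(X + s d)) is
  D^2u[v,v] + Du[d^2 e^X]. Differentiating twice the invariance of phi under the phase
  rotations of G_{n,k} identifies Du[d^2 e^X] with D^2u[iv,iv], so the second derivative is
  four times the Levi form of u in the direction v; admissibility makes it nonnegative once one
  coordinate of e^X is normalised to 1, which is harmless because phi and psi are projective,
  i.e. F(X + c(1,...,1)) = F(X). Hence F is convex. It is also invariant under the coordinate
  permutations in G_{n,k}: averaging the point over the transpositions (0 p), p < n, and then
  over the swaps of the first block with the others produces a multiple c(1,...,1), and Jensen's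
  inequality gives F(X) >= F(c(1,...,1)) = F(0).
*)

section \<open>Derivatives along curves\<close>

lemma norm_axis: "norm (axis q x :: 'a::real_normed_vector^'i) = norm x"
proof -
  have "(\<Sum>i\<in>UNIV. (norm (axis q x $ i))\<^sup>2) = (norm x)\<^sup>2"
    by (simp add: axis_def if_distrib[of "\<lambda>y. (norm y)\<^sup>2"] cong: if_cong)
  then show ?thesis by (simp add: norm_vec_def L2_set_def)
qed

lemma bounded_linear_axis: "bounded_linear (axis q :: 'a::real_normed_vector \<Rightarrow> 'a^'i)"
proof (rule bounded_linear_intro[where K=1])
  show "axis q (x + y) = axis q x + axis q y" for x y :: 'a
    by (simp add: vec_eq_iff axis_def)
  show "axis q (r *\<^sub>R x) = r *\<^sub>R axis q x" for r and x :: 'a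
    by (simp add: vec_eq_iff axis_def)
  show "norm (axis q x :: 'a^'i) \<le> norm x * 1" for x :: 'a
    by (simp add: norm_axis)
qed

lemma has_vector_derivative_vec_lambda:
  fixes f :: "real \<Rightarrow> 'i::finite \<Rightarrow> 'a::real_normed_vector"
  assumes "\<And>q. ((\<lambda>s. f s q) has_vector_derivative f' q) F"
  shows "((\<lambda>s. \<chi> q. f s q) has_vector_derivative (\<chi> q. f' q)) F"
proof -
  have axis_sum: "(\<chi> q. x q) = (\<Sum>q\<in>UNIV. axis q (x q))" for x :: "'i \<Rightarrow> 'a"
    by (simp add: vec_eq_iff axis_def if_distrib cong: if_cong)
  have "((\<lambda>s. \<Sum>q\<in>UNIV. axis q (f s q)) has_vector_derivative (\<Sum>q\<in>UNIV. axis q (f' q))) F"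
    by (intro has_vector_derivative_sum bounded_linear.has_vector_derivative[OF _ assms]
        bounded_linear_axis)
  then show ?thesis
    by (simp only: axis_sum)
qed

lemma has_real_derivative_Re_Im_nth:
  assumes "(c has_vector_derivative c') F"
  shows "((\<lambda>s. Re (c s $ l)) has_real_derivative Re (c' $ l)) F"
    and "((\<lambda>s. Im (c s $ l)) has_real_derivative Im (c' $ l)) F"
  using bounded_linear.has_vector_derivative[OF
      bounded_linear_compose[OF bounded_linear_Re bounded_linear_vec_nth] assms]
    bounded_linear.has_vector_derivative[OF
      bounded_linear_compose[OF bounded_linear_Im bounded_linear_vec_nth] assms]
  by (simp_all add: has_real_derivative_iff_has_vector_derivative)

lemma has_vector_derivative_cis_mult:
  "((\<lambda>s. cis (s * r) * w) has_vector_derivative \<i> * of_real r * cis (t * r) * w) (at t)"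
  unfolding has_vector_derivative_def
  by (auto intro!: derivative_eq_intros simp: scaleR_conv_of_real algebra_simps)

lemma linear_eq_sum_Re_Im_axis:
  fixes L :: "complex^'i::finite \<Rightarrow> real"
  assumes "linear L"
  shows "L v = (\<Sum>l\<in>UNIV. Re (v $ l) * L (axis l 1) + Im (v $ l) * L (axis l \<i>))"
proof -
  have "v = (\<Sum>l\<in>UNIV. Re (v $ l) *\<^sub>R axis l 1 + Im (v $ l) *\<^sub>R axis l \<i>)"
    by (simp add: vec_eq_iff axis_def complex_eq_iff if_distrib cong: if_cong)
  then have "L v = L (\<Sum>l\<in>UNIV. Re (v $ l) *\<^sub>R axis l 1 + Im (v $ l) *\<^sub>R axis l \<i>)"
    by simp
  then show ?thesis
    using assms by (simp add: linear_sum linear_add linear_scale)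
qed

lemma has_real_derivative_compose_curve:
  fixes u :: "'a::real_normed_vector \<Rightarrow> real"
  assumes "u differentiable at (c t)" and "(c has_vector_derivative c') (at t)"
  shows "((\<lambda>s. u (c s)) has_real_derivative dD u (c t) c') (at t)"
proof -
  have "((\<lambda>s. u (c s)) has_derivative (\<lambda>h. dD u (c t) (h *\<^sub>R c'))) (at t)"
    using diff_chain_at[OF assms(2)[unfolded has_vector_derivative_def]
        assms(1)[unfolded frechet_derivative_works]]
    by (simp add: o_def dD_def)
  moreover have "dD u (c t) (h *\<^sub>R c') = h * dD u (c t) c'" for h
    using linear_frechet_derivative[OF assms(1)] by (simp add: dD_def linear_scale)
  ultimately show ?thesis
    by (simp add: has_field_derivative_def mult_commute_abs)
qed

section \<open>Second derivatives\<close>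

definition real_hessian_form :: "(complex^'i::finite \<Rightarrow> real) \<Rightarrow> complex^'i \<Rightarrow> complex^'i \<Rightarrow> real"
  where "real_hessian_form u z v =
     (\<Sum>l\<in>UNIV. Re (v $ l) * dD2 u z (axis l 1) v + Im (v $ l) * dD2 u z (axis l \<i>) v)"

lemma has_real_derivative_dD_along_curve:
  fixes u :: "complex^'i::finite \<Rightarrow> real"
  assumes u: "\<And>s. u differentiable at (c s)"
    and du: "\<And>b. (\<lambda>w. dD u w b) differentiable at (c t)"
    and c: "\<And>s. (c has_vector_derivative c' s) (at s)"
    and c': "(c' has_vector_derivative c'') (at t)"
  shows "((\<lambda>s. dD u (c s) (c' s)) has_real_derivative
           dD u (c t) c'' + real_hessian_form u (c t) (c' t)) (at t)"
proof -
  have expand: "dD u (c s) v = (\<Sum>l\<in>UNIV. Re (v $ l) * dD u (c s) (axis l 1)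
                                      + Im (v $ l) * dD u (c s) (axis l \<i>))" for s v
    unfolding dD_def by (rule linear_eq_sum_Re_Im_axis[OF linear_frechet_derivative[OF u]])
  have "((\<lambda>s. dD u (c s) b) has_real_derivative dD2 u (c t) b (c' t)) (at t)" for b
    unfolding dD2_def by (rule has_real_derivative_compose_curve[OF du c])
  then have "((\<lambda>s. \<Sum>l\<in>UNIV. Re (c' s $ l) * dD u (c s) (axis l 1)
                            + Im (c' s $ l) * dD u (c s) (axis l \<i>))
      has_real_derivative (\<Sum>l\<in>UNIV.
          (Re (c' t $ l) * dD2 u (c t) (axis l 1) (c' t) + Re (c'' $ l) * dD u (c t) (axis l 1))
        + (Im (c' t $ l) * dD2 u (c t) (axis l \<i>) (c' t) + Im (c'' $ l) * dD u (c t) (axis l \<i>))))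
      (at t)"
    by (intro DERIV_sum DERIV_add DERIV_mult' has_real_derivative_Re_Im_nth[OF c'])
  then show ?thesis
    unfolding expand[of t c''] expand[of _ "c' _"]
    by (simp add: real_hessian_form_def sum.distrib algebra_simps)
qed

lemma real_hessian_form_add_i_scale:
  fixes u :: "complex^'i::finite \<Rightarrow> real"
  assumes "\<And>b. (\<lambda>w. dD u w b) differentiable at z"
  shows "real_hessian_form u z v + real_hessian_form u z (\<i> *s v)
       = 4 * Re (\<Sum>l\<in>UNIV. \<Sum>m\<in>UNIV. wirt2 u z l m * v $ l * cnj (v $ m))"
proof -
  define A where "A l m = dD2 u z (axis l 1) (axis m 1)" for l m
  define B where "B l m = dD2 u z (axis l \<i>) (axis m \<i>)" for l m
  define C where "C l m = dD2 u z (axis l 1) (axis m \<i>)" for l m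
  define D where "D l m = dD2 u z (axis l \<i>) (axis m 1)" for l m
  have expand: "dD2 u z b w = (\<Sum>m\<in>UNIV. Re (w $ m) * dD2 u z b (axis m 1)
                                    + Im (w $ m) * dD2 u z b (axis m \<i>))" for b w
    unfolding dD2_def dD_def
    by (rule linear_eq_sum_Re_Im_axis[OF linear_frechet_derivative[OF assms[unfolded dD_def]]])
  let ?P = "\<lambda>l. Re (v $ l)" and ?R = "\<lambda>l. Im (v $ l)"
  have "real_hessian_form u z v + real_hessian_form u z (\<i> *s v)
     = (\<Sum>l\<in>UNIV. \<Sum>m\<in>UNIV. (?P l * ?P m + ?R l * ?R m) * (A l m + B l m)
          + (?P l * ?R m - ?R l * ?P m) * (C l m - D l m))"
    unfolding real_hessian_form_def expand[of _ v] expand[of _ "\<i> *s v"]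
    by (simp add: A_def B_def C_def D_def sum_distrib_left sum.distrib[symmetric] algebra_simps)
  also have "\<dots> = 4 * Re (\<Sum>l\<in>UNIV. \<Sum>m\<in>UNIV. wirt2 u z l m * v $ l * cnj (v $ m))"
    by (simp add: Re_sum sum_distrib_left wirt2_def A_def B_def C_def D_def algebra_simps,
        intro sum.cong refl, simp add: field_simps)
  finally show ?thesis .
qed

definition twice_differentiable_on :: "'a::real_normed_vector set \<Rightarrow> ('a \<Rightarrow> real) \<Rightarrow> bool"
  where "twice_differentiable_on S u \<longleftrightarrow>
    (\<forall>z\<in>S. u differentiable at z \<and> (\<forall>b. (\<lambda>w. dD u w b) differentiable at z))"

lemma smooth_on_imp_twice_differentiable_on:
  assumes "smooth_on S f" and "open S"
  shows "twice_differentiable_on S f"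
proof -
  have "Ck_on 2 S f"
    using assms(1) unfolding smooth_on_def by blast
  then show ?thesis
    using assms(2) by (simp add: numeral_2_eq_2 twice_differentiable_on_def dD_def
        differentiable_on_eq_differentiable_at)
qed

lemma twice_differentiable_on_add_cmult:
  assumes "open S" and f: "twice_differentiable_on S f" and g: "twice_differentiable_on S g"
  shows "twice_differentiable_on S (\<lambda>w. c * f w + g w)"
  unfolding twice_differentiable_on_def
proof (intro ballI conjI allI)
  have sum_rule: "((\<lambda>w. c * f w + g w) has_derivative (\<lambda>h. c * dD f w h + dD g w h)) (at w)"
    if "w \<in> S" for w
    using f g that unfolding twice_differentiable_on_def dD_def
    by (auto intro!: derivative_eq_intros simp: frechet_derivative_works[symmetric])
  fix z b assume "z \<in> S"
  then show "(\<lambda>w. c * f w + g w) differentiable at z"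
    using sum_rule differentiableI by blast
  have "((\<lambda>w. c * dD f w b + dD g w b) has_derivative
          (\<lambda>h. c * dD (\<lambda>w. dD f w b) z h + dD (\<lambda>w. dD g w b) z h)) (at z)"
    using f g \<open>z \<in> S\<close> unfolding twice_differentiable_on_def dD_def
    by (auto intro!: derivative_eq_intros simp: frechet_derivative_works[symmetric])
  moreover have "c * dD f w b + dD g w b = dD (\<lambda>w. c * f w + g w) w b" if "w \<in> S" for w
    using fun_cong[OF frechet_derivative_at[OF sum_rule[OF that]], of b] by (simp add: dD_def)
  ultimately have "((\<lambda>w. dD (\<lambda>w. c * f w + g w) w b) has_derivative
          (\<lambda>h. c * dD (\<lambda>w. dD f w b) z h + dD (\<lambda>w. dD g w b) z h)) (at z)"
    by (rule has_derivative_transform_within_open[OF _ assms(1) \<open>z \<in> S\<close>])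
  then show "(\<lambda>w. dD (\<lambda>w. c * f w + g w) w b) differentiable at z"
    by (rule differentiableI)
qed

lemma twice_differentiable_on_ln_norm_squared:
  "twice_differentiable_on (- {0}) (\<lambda>w::complex^'i::finite. ln (\<Sum>q\<in>UNIV. (cmod (w $ q))\<^sup>2))"
proof -
  have norm_sq: "(\<Sum>q\<in>UNIV. (cmod (w $ q))\<^sup>2) = w \<bullet> w" for w :: "complex^'i"
    by (simp add: inner_vec_def power2_norm_eq_inner)
  have deriv: "((\<lambda>w. ln (w \<bullet> w)) has_derivative (\<lambda>h. (w \<bullet> h + h \<bullet> w) / (w \<bullet> w))) (at w)"
    if "w \<noteq> 0" for w :: "complex^'i"
    using that by (auto intro!: derivative_eq_intros simp: field_simps)
  show ?thesis
    unfolding twice_differentiable_on_def norm_sq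
  proof (intro ballI conjI allI)
    fix z b :: "complex^'i" assume "z \<in> - {0}"
    then show "(\<lambda>w. ln (w \<bullet> w)) differentiable at z"
      using deriv differentiableI by blast
    have "((\<lambda>w. (w \<bullet> b + b \<bullet> w) / (w \<bullet> w)) has_derivative
       (\<lambda>h. ((h \<bullet> b + b \<bullet> h) * (z \<bullet> z) - (z \<bullet> b + b \<bullet> z) * (z \<bullet> h + h \<bullet> z)) / (z \<bullet> z)\<^sup>2)) (at z)"
      using \<open>z \<in> - {0}\<close> by (auto intro!: derivative_eq_intros simp: field_simps power2_eq_square)
    moreover have "(w \<bullet> b + b \<bullet> w) / (w \<bullet> w) = dD (\<lambda>w. ln (w \<bullet> w)) w b" if "w \<in> - {0}" for w
      using fun_cong[OF frechet_derivative_at[OF deriv], of w b] that by (simp add: dD_def)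
    ultimately have "((\<lambda>w. dD (\<lambda>w. ln (w \<bullet> w)) w b) has_derivative
       (\<lambda>h. ((h \<bullet> b + b \<bullet> h) * (z \<bullet> z) - (z \<bullet> b + b \<bullet> z) * (z \<bullet> h + h \<bullet> z)) / (z \<bullet> z)\<^sup>2)) (at z)"
      by (rule has_derivative_transform_within_open[OF _ open_Compl[OF closed_singleton]
            \<open>z \<in> - {0}\<close>])
    then show "(\<lambda>w. dD (\<lambda>w. ln (w \<bullet> w)) w b) differentiable at z"
      by (rule differentiableI)
  qed
qed

lemma real_hessian_form_rotation_invariant:
  fixes u :: "complex^'i::finite \<Rightarrow> real" and d :: "'i \<Rightarrow> real"
  assumes u: "twice_differentiable_on (- {0}) u"
    and rot: "\<And>\<theta> w. w \<noteq> 0 \<Longrightarrow> u (\<chi> q. cis (\<theta> q) * w $ q) = u w"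
    and "z \<noteq> 0"
  shows "real_hessian_form u z (\<chi> q. \<i> * of_real (d q) * z $ q)
       = dD u z (\<chi> q. of_real ((d q)\<^sup>2) * z $ q)"
proof -
  define \<rho> where "\<rho> s = (\<chi> q. cis (s * d q) * z $ q)" for s
  define \<rho>' where "\<rho>' s = (\<chi> q. \<i> * of_real (d q) * cis (s * d q) * z $ q)" for s
  have \<rho>_nonzero: "\<rho> s \<noteq> 0" for s
    using \<open>z \<noteq> 0\<close> by (simp add: \<rho>_def vec_eq_iff)
  have \<rho>_deriv: "(\<rho> has_vector_derivative \<rho>' s) (at s)" for s
    unfolding \<rho>_def \<rho>'_def
    by (rule has_vector_derivative_vec_lambda) (rule has_vector_derivative_cis_mult)
  have "((\<lambda>s. \<i> * of_real (d q) * cis (s * d q) * z $ q) has_vector_derivative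
          - (of_real ((d q)\<^sup>2) * z $ q)) (at 0)" for q
    using has_vector_derivative_cis_mult[of "d q" "\<i> * of_real (d q) * z $ q" 0]
    by (simp add: mult_ac power2_eq_square)
  moreover have "- (\<chi> q. of_real ((d q)\<^sup>2) * z $ q) = (\<chi> q. - (of_real ((d q)\<^sup>2) * z $ q))"
    by (simp add: vec_eq_iff)
  ultimately have \<rho>'_deriv: "(\<rho>' has_vector_derivative - (\<chi> q. of_real ((d q)\<^sup>2) * z $ q)) (at 0)"
    unfolding \<rho>'_def by (simp only: has_vector_derivative_vec_lambda)
  have "u (\<rho> s) = u z" for s
    unfolding \<rho>_def using rot[OF \<open>z \<noteq> 0\<close>] .
  then have "((\<lambda>s. u (\<rho> s)) has_real_derivative 0) (at s)" for s
    by simp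
  then have first_zero: "dD u (\<rho> s) (\<rho>' s) = 0" for s
    using has_real_derivative_compose_curve[OF _ \<rho>_deriv] u \<rho>_nonzero DERIV_unique
    unfolding twice_differentiable_on_def by blast
  have "((\<lambda>s. dD u (\<rho> s) (\<rho>' s)) has_real_derivative
          dD u (\<rho> 0) (- (\<chi> q. of_real ((d q)\<^sup>2) * z $ q))
          + real_hessian_form u (\<rho> 0) (\<rho>' 0)) (at 0)"
    using u \<rho>_nonzero unfolding twice_differentiable_on_def
    by (intro has_real_derivative_dD_along_curve[OF _ _ \<rho>_deriv \<rho>'_deriv]) auto
  then have "dD u z (- (\<chi> q. of_real ((d q)\<^sup>2) * z $ q)) + real_hessian_form u z (\<rho>' 0) = 0"
    unfolding first_zero by (simp add: \<rho>_def DERIV_unique[OF _ DERIV_const])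
  moreover have "linear (dD u z)"
    using u \<open>z \<noteq> 0\<close> unfolding twice_differentiable_on_def dD_def
    by (blast intro: linear_frechet_derivative)
  ultimately show ?thesis
    by (simp add: \<rho>'_def linear_neg)
qed

section \<open>Convexity in logarithmic coordinates\<close>

definition exp_vec :: "real^'i::finite \<Rightarrow> complex^'i"
  where "exp_vec X = (\<chi> q. of_real (exp (X $ q)))"

lemma exp_vec_nonzero: "exp_vec X \<noteq> 0"
  by (simp add: exp_vec_def vec_eq_iff)

lemma convex_on_exp_vec_line:
  fixes u :: "complex^'i::finite \<Rightarrow> real"
  assumes u: "twice_differentiable_on (- {0}) u"
    and rot: "\<And>\<theta> w. w \<noteq> 0 \<Longrightarrow> u (\<chi> q. cis (\<theta> q) * w $ q) = u w"
    and psh: "\<And>z v. z $ j = 1 \<Longrightarrow> v $ j = 0 \<Longrightarrow>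
                0 \<le> Re (\<Sum>l\<in>UNIV. \<Sum>m\<in>UNIV. wirt2 u z l m * v $ l * cnj (v $ m))"
    and "X $ j = 0" and "d $ j = 0"
  shows "convex_on UNIV (\<lambda>s. u (exp_vec (X + s *\<^sub>R d)))"
proof -
  define c where "c s = exp_vec (X + s *\<^sub>R d)" for s
  define c' where "c' s = (\<chi> q. of_real (d $ q) * c s $ q)" for s
  define c'' where "c'' s = (\<chi> q. of_real ((d $ q)\<^sup>2) * c s $ q)" for s
  have u_at: "u differentiable at (c s)" "\<And>b. (\<lambda>w. dD u w b) differentiable at (c s)" for s
    using u exp_vec_nonzero unfolding twice_differentiable_on_def c_def by blast+
  have c_deriv: "(c has_vector_derivative c' s) (at s)" for s
    unfolding c_def c'_def exp_vec_def
    by (intro has_vector_derivative_vec_lambda) (auto intro!: derivative_eq_intros)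
  have c'_deriv: "(c' has_vector_derivative c'' s) (at s)" for s
    unfolding c'_def c''_def c_def exp_vec_def
    by (intro has_vector_derivative_vec_lambda)
      (auto intro!: derivative_eq_intros simp: power2_eq_square)
  have "dD u (c s) (c'' s) = real_hessian_form u (c s) (\<i> *s c' s)" for s
  proof -
    have "\<i> *s c' s = (\<chi> q. \<i> * of_real (d $ q) * c s $ q)"
      by (simp add: c'_def vec_eq_iff mult.assoc)
    then show ?thesis
      using real_hessian_form_rotation_invariant[OF u rot, of "c s" "\<lambda>q. d $ q"]
      by (simp add: c''_def c_def exp_vec_nonzero)
  qed
  moreover have "0 \<le> real_hessian_form u (c s) (c' s) + real_hessian_form u (c s) (\<i> *s c' s)" for s
    unfolding real_hessian_form_add_i_scale[OF u_at(2)]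
    using psh[of "c s" "c' s"] \<open>X $ j = 0\<close> \<open>d $ j = 0\<close> by (simp add: c_def c'_def exp_vec_def)
  ultimately show ?thesis
    unfolding c_def[symmetric]
    by (intro f''_ge0_imp_convex[OF convex_UNIV
          has_real_derivative_compose_curve[OF u_at(1) c_deriv]
          has_real_derivative_dD_along_curve[OF u_at(1) u_at(2) c_deriv c'_deriv]])
      (simp_all add: add.commute)
qed

lemma convex_on_exp_vec_hyperplane:
  fixes u :: "complex^'i::finite \<Rightarrow> real"
  assumes u: "twice_differentiable_on (- {0}) u"
    and rot: "\<And>\<theta> w. w \<noteq> 0 \<Longrightarrow> u (\<chi> q. cis (\<theta> q) * w $ q) = u w"
    and psh: "\<And>z v. z $ j = 1 \<Longrightarrow> v $ j = 0 \<Longrightarrow>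
                0 \<le> Re (\<Sum>l\<in>UNIV. \<Sum>m\<in>UNIV. wirt2 u z l m * v $ l * cnj (v $ m))"
  shows "convex_on {X. X $ j = 0} (\<lambda>X. u (exp_vec X))"
proof (rule convex_onI)
  fix t :: real and X Y :: "real^'i"
  assume "0 < t" "t < 1" "X \<in> {X. X $ j = 0}" "Y \<in> {X. X $ j = 0}"
  then have "convex_on UNIV (\<lambda>s. u (exp_vec (X + s *\<^sub>R (Y - X))))"
    by (intro convex_on_exp_vec_line[OF u rot psh]) auto
  from convex_onD[OF this, of t 0 1] \<open>0 < t\<close> \<open>t < 1\<close>
  show "u (exp_vec ((1 - t) *\<^sub>R X + t *\<^sub>R Y)) \<le> (1 - t) * u (exp_vec X) + t * u (exp_vec Y)"
    by (simp add: algebra_simps)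
next
  show "convex {X :: real^'i. X $ j = 0}"
    by (rule subspace_imp_convex) (auto simp: subspace_def)
qed

lemma convex_on_UNIV_if_shift_invariant:
  fixes f :: "real^'i::finite \<Rightarrow> real"
  assumes "convex_on {X. X $ j = 0} f" and shift: "\<And>X c. f (X + c *\<^sub>R 1) = f X"
  shows "convex_on UNIV f"
proof (rule convex_onI)
  fix t :: real and X Y :: "real^'i"
  assume "0 < t" "t < 1"
  define P where "P X = X - (X $ j) *\<^sub>R 1" for X :: "real^'i"
  have f_P: "f (P X) = f X" for X
    unfolding P_def using shift[of X "- X $ j"] by simp
  have "P ((1 - t) *\<^sub>R X + t *\<^sub>R Y) = (1 - t) *\<^sub>R P X + t *\<^sub>R P Y"
    by (simp add: P_def vec_eq_iff algebra_simps)
  then have "f ((1 - t) *\<^sub>R X + t *\<^sub>R Y) = f ((1 - t) *\<^sub>R P X + t *\<^sub>R P Y)"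
    by (metis f_P)
  also have "\<dots> \<le> (1 - t) * f (P X) + t * f (P Y)"
    using convex_onD[OF assms(1), of t "P X" "P Y"] \<open>0 < t\<close> \<open>t < 1\<close> by (simp add: P_def)
  finally show "f ((1 - t) *\<^sub>R X + t *\<^sub>R Y) \<le> (1 - t) * f X + t * f Y"
    by (simp add: f_P)
qed simp

lemma proj_fun_psi: "proj_fun (psi a :: complex^'i::finite \<Rightarrow> real)"
  unfolding proj_fun_def
proof (intro allI impI)
  fix c :: complex and z :: "complex^'i"
  assume "c \<noteq> 0"
  define r where "r = cmod c"
  define P where "P = (\<Prod>q\<in>UNIV. cmod (z $ q))"
  define S where "S = (\<Sum>q\<in>UNIV. (cmod (z $ q))\<^sup>2)"
  define n where "n = CARD('i)"
  have "r > 0" "P \<ge> 0" "S \<ge> 0" "n > 0"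
    using \<open>c \<noteq> 0\<close> by (simp_all add: r_def P_def S_def n_def prod_nonneg sum_nonneg)
  have "(\<Prod>q\<in>UNIV. cmod ((c *s z) $ q)) = r ^ n * P"
    by (simp add: norm_mult prod.distrib r_def P_def n_def)
  moreover have "(\<Sum>q\<in>UNIV. (cmod ((c *s z) $ q))\<^sup>2) = r\<^sup>2 * S"
    by (simp add: norm_mult power_mult_distrib sum_distrib_left r_def S_def)
  moreover have "(r ^ n * P) powr (2 * a / n) = r powr (2 * a) * P powr (2 * a / n)"
  proof -
    have "(r ^ n * P) powr (2 * a / n) = (r powr n) powr (2 * a / n) * P powr (2 * a / n)"
      using \<open>r > 0\<close> \<open>P \<ge> 0\<close> by (simp add: powr_mult powr_realpow)
    then show ?thesis
      using \<open>n > 0\<close> by (simp add: powr_powr)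
  qed
  moreover have "(r\<^sup>2 * S) powr a = r powr (2 * a) * S powr a"
  proof -
    have "(r\<^sup>2 * S) powr a = (r powr 2) powr a * S powr a"
      using \<open>r > 0\<close> \<open>S \<ge> 0\<close> by (simp add: powr_mult powr_numeral)
    then show ?thesis
      by (simp add: powr_powr)
  qed
  ultimately show "psi a (c *s z) = psi a z"
    using \<open>r > 0\<close> by (simp add: psi_def P_def S_def n_def)
qed

lemma proj_fun_exp_vec_shift:
  assumes "proj_fun f"
  shows "f (exp_vec (X + c *\<^sub>R 1)) = f (exp_vec X)"
proof -
  have "exp_vec (X + c *\<^sub>R 1) = of_real (exp c) *s exp_vec X"
    by (simp add: exp_vec_def vec_eq_iff exp_add mult.commute)
  then show ?thesis
    using assms exp_vec_nonzero unfolding proj_fun_def by (metis exp_not_eq_zero of_real_eq_0_iff)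
qed

lemma psi_exp_vec:
  "psi a (exp_vec X) = 2 * a / real CARD('i) * (\<Sum>q\<in>UNIV. X $ q)
                        - a * ln (\<Sum>q\<in>UNIV. (cmod (exp_vec X $ q))\<^sup>2)"
  for X :: "real^'i::finite"
proof -
  have "(\<Sum>q\<in>UNIV. (cmod (exp_vec X $ q))\<^sup>2) > 0"
    by (simp add: exp_vec_def sum_pos)
  then show ?thesis
    by (simp add: psi_def exp_vec_def exp_sum[symmetric] ln_div ln_powr)
qed

definition phi_psi_exp :: "real \<Rightarrow> (complex^'i::finite \<Rightarrow> real) \<Rightarrow> real^'i \<Rightarrow> real"
  where "phi_psi_exp a \<phi> X = \<phi> (exp_vec X) - psi a (exp_vec X)"

lemma phi_psi_exp_shift:
  assumes "proj_fun \<phi>"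
  shows "phi_psi_exp a \<phi> (X + c *\<^sub>R 1) = phi_psi_exp a \<phi> X"
  using proj_fun_exp_vec_shift[OF assms] proj_fun_exp_vec_shift[OF proj_fun_psi]
  by (simp add: phi_psi_exp_def)

lemma convex_on_linear:
  assumes "linear f" and "convex S"
  shows "convex_on S f"
  by (rule convex_onI) (simp_all add: assms linear_add linear_scale)

lemma convex_on_phi_psi_exp:
  fixes \<phi> :: "complex^'i::finite \<Rightarrow> real"
  assumes "smooth_on (- {0}) \<phi>" and "admissible a \<phi>" and "proj_fun \<phi>"
    and rot: "\<And>\<theta> z. z \<noteq> 0 \<Longrightarrow> \<phi> (\<chi> q. cis (\<theta> q) * z $ q) = \<phi> z"
  shows "convex_on UNIV (phi_psi_exp a \<phi>)"
proof -
  define u where "u w = a * ln (\<Sum>q\<in>UNIV. (cmod (w $ q))\<^sup>2) + \<phi> w" for w :: "complex^'i"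
  have u: "twice_differentiable_on (- {0}) u"
    unfolding u_def
    by (intro twice_differentiable_on_add_cmult twice_differentiable_on_ln_norm_squared
        smooth_on_imp_twice_differentiable_on assms(1)) auto
  have u_rot: "u (\<chi> q. cis (\<theta> q) * w $ q) = u w" if "w \<noteq> 0" for \<theta> w
    using rot[OF that] by (simp add: u_def norm_mult)
  have "convex_on {X. X $ j = 0} (phi_psi_exp a \<phi>)" for j
  proof -
    have "0 \<le> Re (\<Sum>l\<in>UNIV. \<Sum>m\<in>UNIV. wirt2 u z l m * v $ l * cnj (v $ m))"
      if "z $ j = 1" "v $ j = 0" for z v
    proof (cases "v = 0")
      case False
      then show ?thesis
        using assms(2) that unfolding admissible_def posdef_on_def u_def
        by (metis (mono_tags, lifting) less_le mem_Collect_eq)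
    qed simp
    then have "convex_on {X. X $ j = 0} (\<lambda>X. u (exp_vec X))"
      using convex_on_exp_vec_hyperplane[OF u u_rot] by blast
    moreover have "convex_on {X. X $ j = 0} (\<lambda>X. - (2 * a / CARD('i) * (\<Sum>q\<in>UNIV. X $ q)))"
      by (intro convex_on_linear linearI convex_on_imp_convex[OF calculation])
        (simp_all add: sum.distrib sum_distrib_left algebra_simps add_divide_distrib)
    ultimately have "convex_on {X. X $ j = 0}
        (\<lambda>X. u (exp_vec X) + - (2 * a / CARD('i) * (\<Sum>q\<in>UNIV. X $ q)))"
      by (rule convex_on_add)
    then show ?thesis
      by (simp add: phi_psi_exp_def[abs_def] psi_exp_vec u_def algebra_simps)
  qed
  then show ?thesis
    by (rule convex_on_UNIV_if_shift_invariant[OF _ phi_psi_exp_shift[OF assms(3)]])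
qed

section \<open>Invariance under the group\<close>

lemma phase_rotation_in_Gnk:
  fixes idx :: "nat \<Rightarrow> 'i::finite"
  assumes bij: "bij_betw idx {0..<k * n} (UNIV :: 'i set)" and "finite S"
  shows "(\<lambda>z. \<chi> q. if q \<in> S then cis (\<theta> q) * z $ q else z $ q) \<in> Gnk idx n k"
  using \<open>finite S\<close>
proof (induction S rule: finite_induct)
  case empty
  have "(\<lambda>z::complex^'i. \<chi> q. if q \<in> {} then cis (\<theta> q) * z $ q else z $ q) = id"
    by (simp add: fun_eq_iff)
  then show ?case
    using Gnk.id by simp
next
  case (insert q S)
  obtain p where p: "p < k * n" "idx p = q"
    using bij unfolding bij_betw_def by (metis UNIV_I atLeastLessThan_iff imageE)
  have "phase_coord idx p (\<theta> q) \<circ> (\<lambda>z. \<chi> q. if q \<in> S then cis (\<theta> q) * z $ q else z $ q)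
     = (\<lambda>z. \<chi> q'. if q' \<in> insert q S then cis (\<theta> q') * z $ q' else z $ q')"
    using insert.hyps(2) p by (auto simp: fun_eq_iff vec_eq_iff phase_coord_def)
  then show ?case
    using Gnk.phase[OF insert.IH p(1), of "\<theta> q"] by (simp only:)
qed

lemma G_invariant_rotation:
  fixes idx :: "nat \<Rightarrow> 'i::finite"
  assumes "bij_betw idx {0..<k * n} (UNIV :: 'i set)" and "G_invariant idx n k \<phi>" and "z \<noteq> 0"
  shows "\<phi> (\<chi> q. cis (\<theta> q) * z $ q) = \<phi> z"
  using phase_rotation_in_Gnk[OF assms(1), of UNIV \<theta>] assms(2,3)
  unfolding G_invariant_def by auto

lemma block_swap_zero_div_mod:
  assumes "0 < n"
  shows "block_swap n 0 b m div n = (if m div n = 0 then b else if m div n = b then 0 else m div n)"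
    and "block_swap n 0 b m mod n = m mod n"
  using assms by (auto simp: block_swap_def)

lemma block_swap_zero_less_iff:
  assumes "0 < n"
  shows "block_swap n 0 b m < n \<longleftrightarrow> m div n = b"
proof -
  have "block_swap n 0 b m < n \<longleftrightarrow> block_swap n 0 b m div n = 0"
    using assms by (simp add: div_eq_0_iff)
  then show ?thesis
    by (auto simp: block_swap_zero_div_mod[OF assms])
qed

lemma bij_betw_block_swap_zero:
  assumes "0 < n" and "b < k"
  shows "bij_betw (block_swap n 0 b) {0..<k * n} {0..<k * n}"
proof -
  have "block_swap n 0 b (block_swap n 0 b m) div n = m div n"
    and "block_swap n 0 b (block_swap n 0 b m) mod n = m mod n" for m
    by (auto simp: block_swap_zero_div_mod[OF assms(1)])
  then have involution: "\<forall>m\<in>{0..<k * n}. block_swap n 0 b (block_swap n 0 b m) = m"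
    by (metis div_mult_mod_eq)
  have "block_swap n 0 b m < k * n" if "m < k * n" for m
    using that assms by (simp add: block_swap_zero_div_mod div_less_iff_less_mult[symmetric])
  then have maps_to: "block_swap n 0 b ` {0..<k * n} \<subseteq> {0..<k * n}"
    by auto
  show ?thesis
    using involution maps_to by (intro bij_betw_byWitness[where f' = "block_swap n 0 b"])
qed

definition idx_vec :: "(nat \<Rightarrow> 'i::finite) \<Rightarrow> nat \<Rightarrow> (nat \<Rightarrow> real) \<Rightarrow> real^'i"
  where "idx_vec idx N h = (\<chi> q. h (inv_into {0..<N} idx q))"

lemma inv_into_less:
  assumes "bij_betw idx {0..<N} (UNIV :: 'i set)"
  shows "inv_into {0..<N} idx q < N"
  using bij_betw_apply[OF bij_betw_inv_into[OF assms]] by simp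

lemma idx_vec_cong:
  assumes "bij_betw idx {0..<N} (UNIV :: 'i::finite set)" and "\<And>m. m < N \<Longrightarrow> h m = h' m"
  shows "idx_vec idx N h = idx_vec idx N h'"
  using assms(2) inv_into_less[OF assms(1)] by (simp add: idx_vec_def vec_eq_iff)

lemma sum_idx_vec: "(\<Sum>p\<in>P. idx_vec idx N (h p)) = idx_vec idx N (\<lambda>m. \<Sum>p\<in>P. h p m)"
  by (simp add: idx_vec_def vec_eq_iff sum_component)

lemma perm_coords_exp_vec_idx_vec:
  assumes "bij_betw idx {0..<N} (UNIV :: 'i::finite set)" and "\<sigma> ` {0..<N} \<subseteq> {0..<N}"
  shows "perm_coords idx N \<sigma> (exp_vec (idx_vec idx N h)) = exp_vec (idx_vec idx N (h \<circ> \<sigma>))"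
proof -
  have "\<sigma> (inv_into {0..<N} idx q) \<in> {0..<N}" for q
    using assms(2) inv_into_less[OF assms(1)] by (auto simp: image_subset_iff)
  then have "inv_into {0..<N} idx (idx (\<sigma> (inv_into {0..<N} idx q)))
      = \<sigma> (inv_into {0..<N} idx q)" for q
    by (rule inv_into_f_f[OF bij_betw_imp_inj_on[OF assms(1)]])
  then show ?thesis
    by (simp add: perm_coords_def exp_vec_def idx_vec_def)
qed

lemma psi_perm_coords:
  assumes "bij_betw idx {0..<N} (UNIV :: 'i::finite set)" and "bij_betw \<sigma> {0..<N} {0..<N}"
  shows "psi a (perm_coords idx N \<sigma> z) = psi a z"
proof -
  have \<pi>: "bij_betw (idx \<circ> (\<sigma> \<circ> inv_into {0..<N} idx)) UNIV UNIV"
    using bij_betw_trans[OF bij_betw_trans[OF bij_betw_inv_into[OF assms(1)] assms(2)] assms(1)] .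
  have sum_eq: "(\<Sum>q\<in>UNIV. g (z $ idx (\<sigma> (inv_into {0..<N} idx q)))) = (\<Sum>q\<in>UNIV. g (z $ q))"
    and prod_eq: "(\<Prod>q\<in>UNIV. g (z $ idx (\<sigma> (inv_into {0..<N} idx q)))) = (\<Prod>q\<in>UNIV. g (z $ q))"
    for g :: "complex \<Rightarrow> real"
    using sum.reindex_bij_betw[OF \<pi>, of "\<lambda>w. g (z $ w)"]
      prod.reindex_bij_betw[OF \<pi>, of "\<lambda>w. g (z $ w)"] by simp_all
  show ?thesis
    by (simp add: psi_def perm_coords_def sum_eq[of "\<lambda>w. (cmod w)\<^sup>2"] prod_eq[of cmod])
qed

lemma phi_psi_exp_perm_invariant:
  assumes "bij_betw idx {0..<N} (UNIV :: 'i::finite set)" and "bij_betw \<sigma> {0..<N} {0..<N}"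
    and "\<And>z. z \<noteq> 0 \<Longrightarrow> \<phi> (perm_coords idx N \<sigma> z) = \<phi> z"
  shows "phi_psi_exp a \<phi> (idx_vec idx N (h \<circ> \<sigma>)) = phi_psi_exp a \<phi> (idx_vec idx N h)"
  using assms(3) exp_vec_nonzero psi_perm_coords[OF assms(1,2)]
    perm_coords_exp_vec_idx_vec[OF assms(1) bij_betw_imp_surj_on[OF assms(2), THEN equalityD1]]
  by (metis phi_psi_exp_def)

lemma phi_psi_exp_transpose_invariant:
  fixes idx :: "nat \<Rightarrow> 'i::finite"
  assumes "bij_betw idx {0..<k * n} (UNIV :: 'i set)" and "G_invariant idx n k \<phi>"
    and "p < n" and "0 < k"
  shows "phi_psi_exp a \<phi> (idx_vec idx (k * n) (h \<circ> Transposition.transpose 0 p))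
       = phi_psi_exp a \<phi> (idx_vec idx (k * n) h)"
proof (rule phi_psi_exp_perm_invariant[OF assms(1)])
  have "n \<le> k * n"
    using \<open>0 < k\<close> by simp
  then have "p < k * n"
    using \<open>p < n\<close> by linarith
  then show "bij_betw (Transposition.transpose 0 p) {0..<k * n} {0..<k * n}"
    using \<open>0 < k\<close> \<open>p < n\<close> by (intro bij_betw_transpose_iff) auto
  have "perm_coords idx (k * n) (Transposition.transpose 0 p) \<circ> id \<in> Gnk idx n k"
    using \<open>0 < k\<close> \<open>p < n\<close> \<open>p < k * n\<close> by (intro Gnk.transp[OF Gnk.id]) auto
  then show "\<phi> (perm_coords idx (k * n) (Transposition.transpose 0 p) z) = \<phi> z" if "z \<noteq> 0" for z
    using assms(2) that unfolding G_invariant_def by fastforce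
qed

lemma phi_psi_exp_block_swap_invariant:
  fixes idx :: "nat \<Rightarrow> 'i::finite"
  assumes "bij_betw idx {0..<k * n} (UNIV :: 'i set)" and "G_invariant idx n k \<phi>"
    and "b < k" and "0 < n"
  shows "phi_psi_exp a \<phi> (idx_vec idx (k * n) (h \<circ> block_swap n 0 b))
       = phi_psi_exp a \<phi> (idx_vec idx (k * n) h)"
proof (rule phi_psi_exp_perm_invariant[OF assms(1) bij_betw_block_swap_zero[OF assms(4,3)]])
  have "perm_coords idx (k * n) (block_swap n 0 b) \<circ> id \<in> Gnk idx n k"
    using \<open>b < k\<close> by (intro Gnk.swap[OF Gnk.id]) auto
  then show "\<phi> (perm_coords idx (k * n) (block_swap n 0 b) z) = \<phi> z" if "z \<noteq> 0" for z
    using assms(2) that unfolding G_invariant_def by fastforce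
qed

section \<open>Symmetrization\<close>

lemma convex_on_mean_le:
  fixes f :: "'a::real_vector \<Rightarrow> real"
  assumes "convex_on UNIV f" and "finite P" and "P \<noteq> {}" and "\<And>p. p \<in> P \<Longrightarrow> f (x p) = c"
  shows "f ((\<Sum>p\<in>P. x p) /\<^sub>R real (card P)) \<le> c"
proof -
  have "f (\<Sum>p\<in>P. (1 / real (card P)) *\<^sub>R x p) \<le> (\<Sum>p\<in>P. 1 / real (card P) * f (x p))"
    using assms by (intro convex_on_sum) auto
  moreover have "(\<Sum>p\<in>P. (1 / real (card P)) *\<^sub>R x p) = (\<Sum>p\<in>P. x p) /\<^sub>R real (card P)"
    by (simp add: scaleR_sum_right divide_inverse)
  ultimately show ?thesis
    using assms by simp
qed

lemma convex_on_idx_vec_average_le: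
  fixes F :: "real^'i::finite \<Rightarrow> real"
  assumes "convex_on UNIV F" and "bij_betw idx {0..<N} (UNIV :: 'i set)"
    and "finite P" and "P \<noteq> {}"
    and "\<And>p. p \<in> P \<Longrightarrow> F (idx_vec idx N (h \<circ> \<sigma> p)) = F (idx_vec idx N h)"
    and "\<And>m. m < N \<Longrightarrow> (\<Sum>p\<in>P. h (\<sigma> p m)) / real (card P) = h' m"
  shows "F (idx_vec idx N h') \<le> F (idx_vec idx N h)"
proof -
  have "idx_vec idx N h' = (\<Sum>p\<in>P. idx_vec idx N (h \<circ> \<sigma> p)) /\<^sub>R real (card P)"
    using idx_vec_cong[OF assms(2) assms(6)[symmetric]]
    by (simp add: sum_idx_vec idx_vec_def vec_eq_iff divide_inverse mult.commute)
  then show ?thesis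
    using convex_on_mean_le[OF assms(1,3,4,5)] by simp
qed

lemma sum_if_eq_lessThan:
  assumes "c < K"
  shows "(\<Sum>b<K. if b = c then x else y) = x + (real K - 1) * (y::real)"
proof -
  have "(\<Sum>b<K. if b = c then x else y) = (\<Sum>b<K. y + (if b = c then x - y else 0))"
    by (rule sum.cong) auto
  then show ?thesis
    using assms by (simp add: sum.distrib algebra_simps)
qed

lemma sum_transpose_zero:
  fixes h :: "nat \<Rightarrow> real"
  assumes "h 0 = 0" and "\<And>p. 0 < p \<Longrightarrow> p < n \<Longrightarrow> h p = x"
  shows "(\<Sum>p<n. h (Transposition.transpose 0 p m)) = (if m < n then (real n - 1) * x else n * h m)"
proof (cases "m < n")
  case True
  have "h (Transposition.transpose 0 p m) = (if p = m then 0 else x)" if "p < n" for p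
    using assms that True by (auto simp: Transposition.transpose_def)
  then have "(\<Sum>p<n. h (Transposition.transpose 0 p m)) = (\<Sum>p<n. if p = m then 0 else x)"
    by (intro sum.cong) auto
  then show ?thesis
    using sum_if_eq_lessThan[OF True] True by simp
next
  case False
  then show ?thesis
    by (simp add: Transposition.transpose_def)
qed

lemma sum_block_swap_zero:
  assumes "0 < n" and "m div n < k"
  shows "(\<Sum>b<k. if block_swap n 0 b m < n then x else y) = x + (real k - 1) * y"
  using sum_if_eq_lessThan[OF assms(2), of x y] block_swap_zero_less_iff[OF assms(1)]
  by (simp add: eq_commute)

lemma symmetrize_first_block:
  fixes F :: "real^'i::finite \<Rightarrow> real" and x y :: real
  assumes "convex_on UNIV F" and "bij_betw idx {0..<N} (UNIV :: 'i set)" and "0 < n"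
    and "\<And>p h. p < n \<Longrightarrow>
           F (idx_vec idx N (h \<circ> Transposition.transpose 0 p)) = F (idx_vec idx N h)"
  shows "F (idx_vec idx N (\<lambda>m. if m < n then (real n - 1) / real n * x else y))
       \<le> F (idx_vec idx N (\<lambda>m. if m = 0 then 0 else if m < n then x else y))"
proof (rule convex_on_idx_vec_average_le[OF assms(1,2), where P = "{..<n}"])
  show "(\<Sum>p\<in>{..<n}. (if Transposition.transpose 0 p m = 0 then 0
            else if Transposition.transpose 0 p m < n then x else y)) / real (card {..<n})
      = (if m < n then (real n - 1) / real n * x else y)" for m
    using \<open>0 < n\<close> by (subst sum_transpose_zero[where x = x]) auto
qed (use assms(3,4) in auto)

lemma symmetrize_blocks:
  fixes F :: "real^'i::finite \<Rightarrow> real" and x y :: real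
  assumes "convex_on UNIV F" and "bij_betw idx {0..<k * n} (UNIV :: 'i set)" and "0 < n" "0 < k"
    and "\<And>b h. b < k \<Longrightarrow>
           F (idx_vec idx (k * n) (h \<circ> block_swap n 0 b)) = F (idx_vec idx (k * n) h)"
  shows "F (((x + (real k - 1) * y) / real k) *\<^sub>R 1)
       \<le> F (idx_vec idx (k * n) (\<lambda>m. if m < n then x else y))"
proof -
  have "idx_vec idx (k * n) (\<lambda>m. (x + (real k - 1) * y) / real k)
      = ((x + (real k - 1) * y) / real k) *\<^sub>R 1"
    by (simp add: idx_vec_def vec_eq_iff)
  moreover have "F (idx_vec idx (k * n) (\<lambda>m. (x + (real k - 1) * y) / real k))
      \<le> F (idx_vec idx (k * n) (\<lambda>m. if m < n then x else y))"
  proof (rule convex_on_idx_vec_average_le[OF assms(1,2), where P = "{..<k}"])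
    show "(\<Sum>b\<in>{..<k}. if block_swap n 0 b m < n then x else y) / real (card {..<k})
        = (x + (real k - 1) * y) / real k" if "m < k * n" for m
      using that \<open>0 < n\<close> sum_block_swap_zero[OF \<open>0 < n\<close>, of m k x y]
      by (simp add: div_less_iff_less_mult)
  qed (use assms(4,5) in auto)
  ultimately show ?thesis
    by simp
qed

lemma pt_eq_exp_vec_idx_vec:
  assumes "0 < \<zeta>" and "0 < \<gamma>"
  shows "pt idx n N \<zeta> \<gamma>
       = exp_vec (idx_vec idx N (\<lambda>m. if m = 0 then 0 else if m < n then ln \<zeta> else ln \<gamma>))"
  using assms by (simp add: pt_def exp_vec_def idx_vec_def vec_eq_iff Let_def)

theorem lemma3:
  fixes \<phi> :: "complex^'i \<Rightarrow> real" and idx :: "nat \<Rightarrow> 'i" and k n :: nat and a :: real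
  assumes "k \<ge> 2" and "n \<ge> 1"
    and "bij_betw idx {0..<k*n} (UNIV :: 'i set)"
    and "a > 0"
    and "proj_fun \<phi>"
    and "smooth_on (- {0}) \<phi>"
    and "admissible a \<phi>"
    and "G_invariant idx n k \<phi>"
    and "0 < \<zeta>" and "\<zeta> \<le> 1" and "0 < \<gamma>" and "\<gamma> \<le> 1"
  shows "\<phi> (pt idx n (k*n) \<zeta> \<gamma>) - psi a (pt idx n (k*n) \<zeta> \<gamma>)
         \<ge> \<phi> (pt idx n (k*n) 1 1) - psi a (pt idx n (k*n) 1 1)"
proof -
  have "0 < n" "0 < k"
    using assms(1,2) by auto
  define \<alpha> where "\<alpha> = (real n - 1) / real n * ln \<zeta>"
  let ?F = "phi_psi_exp a \<phi>"
  have convex: "convex_on UNIV ?F"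
    by (rule convex_on_phi_psi_exp[OF assms(6,7,5) G_invariant_rotation[OF assms(3,8)]])
  have "?F 0 = ?F (((\<alpha> + (real k - 1) * ln \<gamma>) / real k) *\<^sub>R 1)"
    using phi_psi_exp_shift[OF assms(5), where X = 0] by simp
  also have "\<dots> \<le> ?F (idx_vec idx (k * n) (\<lambda>m. if m < n then \<alpha> else ln \<gamma>))"
    by (rule symmetrize_blocks[OF convex assms(3) \<open>0 < n\<close> \<open>0 < k\<close>
          phi_psi_exp_block_swap_invariant[OF assms(3,8) _ \<open>0 < n\<close>]])
  also have "\<dots> \<le> ?F (idx_vec idx (k * n)
                      (\<lambda>m. if m = 0 then 0 else if m < n then ln \<zeta> else ln \<gamma>))"
    unfolding \<alpha>_def
    by (rule symmetrize_first_block[OF convex assms(3) \<open>0 < n\<close>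
          phi_psi_exp_transpose_invariant[OF assms(3,8) _ \<open>0 < k\<close>]])
  finally have "?F 0 \<le> ?F (idx_vec idx (k * n)
                      (\<lambda>m. if m = 0 then 0 else if m < n then ln \<zeta> else ln \<gamma>))" .
  moreover have "pt idx n (k * n) 1 1 = exp_vec 0"
    by (simp add: pt_def exp_vec_def vec_eq_iff Let_def)
  ultimately show ?thesis
    unfolding pt_eq_exp_vec_idx_vec[OF assms(9,11)] phi_psi_exp_def by simp
qed

end
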